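(* Let $d\ge 2$ and let ${\boldsymbol X}=(X_1,\dots,X_d)$ be a random vector with continuous marginal distribution functions $F_1,\dots,F_d$ whose copula $C$ is an extreme-value copula with Pickands dependence function $A$. For ${\boldsymbol w}=(w_1,\dots,w_{d-1})\in\mathcal S_{d-1}$ define the multivariate ${\boldsymbol w}$-madogram $$\nu({\boldsymbol w})=\mathbb E\Big[\max_{1\le i\le d}F_i^{1/w_i}(X_i)-\frac1d\sum_{i=1}^d F_i^{1/w_i}(X_i)\Big].$$ Then for all ${\boldsymbol w}\in\mathcal S_{d-1}$, $$\nu({\boldsymbol w})=\frac{A({\boldsymbol w})}{1+A({\boldsymbol w})}-c({\boldsymbol w}),\qquad A({\boldsymbol w})=\frac{\nu({\boldsymbol w})+c({\boldsymbol w})}{1-\nu({\boldsymbol w})-c({\boldsymbol w})},$$ where $c({\boldsymbol w})=d^{-1}\sum_{i=1}^d w_i/(1+w_i)$, and in particular $\nu({\boldsymbol w})+c({\boldsymbol w})<1$.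
   Context: $\mathcal S_{d-1}=\{(w_1,\dots,w_{d-1})\in[0,1]^{d-1}:\sum_{i=1}^{d-1}w_i\le1\}$, and for ${\boldsymbol w}\in\mathcal S_{d-1}$ one sets $w_d=1-w_1-\dots-w_{d-1}$. Convention: if $w_i=0$ then $u^{1/w_i}=0$ for $u\in[0,1]$. An extreme-value copula is a copula of the form $C(u_1,\dots,u_d)=\exp(-\ell(-\log u_1,\dots,-\log u_d))$ for ${\boldsymbol u}\in(0,1]^d$, where the stable tail dependence function $\ell:[0,\infty)^d\to[0,\infty)$ satisfies $\ell({\boldsymbol z})=(z_1+\dots+z_d)A({\boldsymbol w})$ with $w_i=z_i/(z_1+\dots+z_d)$ for $i=1,\dots,d-1$; the function $A:\mathcal S_{d-1}\to[1/d,1]$ is the Pickands dependence function. *)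

theory Defs
  imports "HOL-Probability.Probability"
begin

text \<open>Components are indexed by 0..d-1. A point of the simplex S_{d-1} is a function
 w :: nat => real whose first d-1 coordinates (indices 0..d-2) lie in [0,1] with sum <= 1;
 coordinates with index >= d-1 are required to be 0 (they carry no information).\<close>

definition simplexS :: "nat \<Rightarrow> (nat \<Rightarrow> real) set" where
  "simplexS d = {w. (\<forall>i<d-1. 0 \<le> w i \<and> w i \<le> 1) \<and> (\<Sum>i<d-1. w i) \<le> 1
                 \<and> (\<forall>i\<ge>d-1. w i = 0)}"

definition wfull :: "nat \<Rightarrow> (nat \<Rightarrow> real) \<Rightarrow> nat \<Rightarrow> real" where
  "wfull d w i = (if i < d - 1 then w i else 1 - (\<Sum>j<d-1. w j))"

definition pw :: "real \<Rightarrow> real \<Rightarrow> real" where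
  "pw u w = (if w = 0 then 0 else u powr (1 / w))"

definition stdf :: "nat \<Rightarrow> ((nat \<Rightarrow> real) \<Rightarrow> real) \<Rightarrow> (nat \<Rightarrow> real) \<Rightarrow> real" where
  "stdf d A z = (\<Sum>i<d. z i) *
     A (\<lambda>i. if i < d - 1 then z i / (\<Sum>j<d. z j) else 0)"

definition marg_cdf :: "'a measure \<Rightarrow> ('a \<Rightarrow> real) \<Rightarrow> real \<Rightarrow> real" where
  "marg_cdf M Y x = measure M {\<omega> \<in> space M. Y \<omega> \<le> x}"

definition madogram :: "'a measure \<Rightarrow> nat \<Rightarrow> (nat \<Rightarrow> 'a \<Rightarrow> real) \<Rightarrow> (nat \<Rightarrow> real) \<Rightarrow> real" where
  "madogram M d X w = (\<integral>\<omega>. (Max ((\<lambda>i. pw (marg_cdf M (X i) (X i \<omega>)) (wfull d w i)) ` {..<d})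
        - (1 / real d) * (\<Sum>i<d. pw (marg_cdf M (X i) (X i \<omega>)) (wfull d w i))) \<partial>M)"

definition cw :: "nat \<Rightarrow> (nat \<Rightarrow> real) \<Rightarrow> real" where
  "cw d w = (1 / real d) * (\<Sum>i<d. wfull d w i / (1 + wfull d w i))"

end

theory Submission imports Defs begin

text \<open>
  Put \<open>U\<^sub>i = F\<^sub>i(X\<^sub>i)\<close>, let \<open>W\<close> be the full weight vector of \<open>w\<close> and
  \<open>Y\<^sub>i = U\<^sub>i\<^bsup>1/W\<^sub>i\<^esup>\<close>.  The madogram is \<open>E[max\<^sub>i Y\<^sub>i] - (1/d) \<Sum>\<^sub>i E[Y\<^sub>i]\<close>, and both kinds of
  expectation are computed from distribution functions of power form:
  \<^item> a \<open>[0,1]\<close>-valued variable with \<open>P(Y \<le> t) = t\<^sup>a\<close> on \<open>(0,1)\<close> has mean \<open>a/(1+a)\<close>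
    (layer-cake formula \<open>E Y = \<integral>\<^sub>0\<^sup>1 P(Y > t) dt\<close>, via Tonelli);
  \<^item> by the probability integral transform each \<open>U\<^sub>i\<close> is uniform, so \<open>P(Y\<^sub>i \<le> t) = t\<^bsup>W\<^sub>i\<^esup>\<close>;
  \<^item> \<open>max\<^sub>i Y\<^sub>i \<le> t\<close> iff \<open>U\<^sub>i \<le> t\<^bsup>W\<^sub>i\<^esup>\<close> for all \<open>i\<close>, and the extreme-value copula evaluated
    there equals \<open>exp(-(-ln t) A(w)) = t\<^bsup>A(w)\<^esup>\<close> by homogeneity of the tail function.
  Hence \<open>\<nu>(w) = A(w)/(1+A(w)) - c(w)\<close>; the other two claims are algebra, using \<open>A(w) > 0\<close>.
\<close>

section \<open>Means of [0,1]-valued variables with power distribution functions\<close>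

lemma has_integral_power_tail:
  fixes a :: real
  assumes a: "0 < a"
  shows "((\<lambda>t. indicator {0..1} t * (1 - t powr a)) has_integral (a / (1 + a))) UNIV"
proof -
  have pow: "((\<lambda>x. x powr a) has_integral (1 / (a + 1))) {0..1}"
    using a has_integral_powr_from_0[of a 1] by simp
  have one: "((\<lambda>x. 1::real) has_integral 1) {0..1::real}"
    using has_integral_const_real[of "1::real" 0 1] by simp
  have "((\<lambda>x. 1 - x powr a) has_integral (1 - 1 / (a + 1))) {0..1}"
    by (rule has_integral_diff[OF one pow])
  moreover have "1 - 1 / (a + 1) = a / (1 + a)"
    using a by (simp add: field_simps)
  ultimately have "((\<lambda>x. if x \<in> {0..1} then 1 - x powr a else 0) has_integral (a / (1 + a))) UNIV"
    by (subst has_integral_restrict_UNIV) simp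
  moreover have "(\<lambda>x. if x \<in> {0..1} then 1 - x powr a else 0)
                 = (\<lambda>t. indicator {0..1} t * (1 - t powr a))"
    by (auto simp: indicator_def)
  ultimately show ?thesis by simp
qed

lemma survival_from_power_cdf:
  fixes M :: "'a measure" and Y :: "'a \<Rightarrow> real" and a t :: real
  assumes "prob_space M" and [measurable]: "Y \<in> borel_measurable M"
    and bnd: "\<And>\<omega>. \<omega> \<in> space M \<Longrightarrow> 0 \<le> Y \<omega> \<and> Y \<omega> \<le> 1"
    and cdf: "\<And>t. 0 < t \<Longrightarrow> t < 1 \<Longrightarrow> measure M {\<omega>\<in>space M. Y \<omega> \<le> t} = t powr a"
    and t: "t \<noteq> 0"
  shows "emeasure M {\<omega>\<in>space M. 0 \<le> t \<and> t < Y \<omega>} = ennreal (indicator {0..1} t * (1 - t powr a))"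
proof -
  interpret prob_space M by fact
  show ?thesis
  proof (cases "0 < t \<and> t < 1")
    case True
    then have "{\<omega>\<in>space M. 0 \<le> t \<and> t < Y \<omega>} = space M - {\<omega>\<in>space M. Y \<omega> \<le> t}"
      by auto
    then have "emeasure M {\<omega>\<in>space M. 0 \<le> t \<and> t < Y \<omega>}
               = ennreal (1 - measure M {\<omega>\<in>space M. Y \<omega> \<le> t})"
      by (simp add: emeasure_eq_measure prob_compl)
    then show ?thesis using True cdf[of t] by (simp add: indicator_def)
  next
    case False
    then have "{\<omega>\<in>space M. 0 \<le> t \<and> t < Y \<omega>} = {}"
      using bnd t by force
    moreover have "indicator {0..1} t * (1 - t powr a) = 0"
      using False t by (auto simp: indicator_def)
    ultimately show ?thesis by (metis emeasure_empty ennreal_0)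
  qed
qed

text \<open>Layer-cake computation: if \<open>0 \<le> Y \<le> 1\<close> and \<open>P(Y \<le> t) = t\<^sup>a\<close> for \<open>0 < t < 1\<close>, then
  \<open>E Y = \<integral>\<^sub>0\<^sup>1 (1 - t\<^sup>a) dt = a/(1+a)\<close>.  The interchange of integrals is Tonelli's theorem.\<close>

lemma expectation_from_power_cdf:
  fixes M :: "'a measure" and Y :: "'a \<Rightarrow> real" and a :: real
  assumes P: "prob_space M" and Ym[measurable]: "Y \<in> borel_measurable M"
    and bnd: "\<And>\<omega>. \<omega> \<in> space M \<Longrightarrow> 0 \<le> Y \<omega> \<and> Y \<omega> \<le> 1"
    and a: "0 < a"
    and cdf: "\<And>t. 0 < t \<Longrightarrow> t < 1 \<Longrightarrow> measure M {\<omega>\<in>space M. Y \<omega> \<le> t} = t powr a"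
  shows "integral\<^sup>L M Y = a / (1 + a)"
proof -
  interpret prob_space M by fact
  interpret pair_sigma_finite lborel M by unfold_locales
  define g where "g t \<omega> = (if 0 \<le> t \<and> t < Y \<omega> then 1 else 0::ennreal)" for t \<omega>
  have g_meas: "case_prod g \<in> borel_measurable (lborel \<Otimes>\<^sub>M M)"
    unfolding g_def by measurable
  have layer: "ennreal (Y \<omega>) = (\<integral>\<^sup>+t. g t \<omega> \<partial>lborel)" if "\<omega> \<in> space M" for \<omega>
  proof -
    have "(\<integral>\<^sup>+t. g t \<omega> \<partial>lborel) = (\<integral>\<^sup>+t. indicator {0..<Y \<omega>} t \<partial>lborel)"
      by (intro nn_integral_cong) (auto simp: g_def indicator_def)
    then show ?thesis using bnd[OF that] by simp
  qed
  have survival: "(\<integral>\<^sup>+\<omega>. g t \<omega> \<partial>M) = ennreal (indicator {0..1} t * (1 - t powr a))"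
    if "t \<noteq> 0" for t
  proof -
    have "(\<integral>\<^sup>+\<omega>. g t \<omega> \<partial>M) = (\<integral>\<^sup>+\<omega>. indicator {\<omega>\<in>space M. 0 \<le> t \<and> t < Y \<omega>} \<omega> \<partial>M)"
      by (intro nn_integral_cong) (auto simp: g_def indicator_def)
    then show ?thesis
      using survival_from_power_cdf[OF P Ym bnd cdf that] by simp
  qed
  have "(\<integral>\<^sup>+\<omega>. ennreal (Y \<omega>) \<partial>M) = (\<integral>\<^sup>+\<omega>. (\<integral>\<^sup>+t. g t \<omega> \<partial>lborel) \<partial>M)"
    by (intro nn_integral_cong) (simp add: layer)
  also have "\<dots> = (\<integral>\<^sup>+t. (\<integral>\<^sup>+\<omega>. g t \<omega> \<partial>M) \<partial>lborel)"
    by (rule Fubini'[OF g_meas])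
  also have "\<dots> = (\<integral>\<^sup>+t. ennreal (indicator {0..1} t * (1 - t powr a)) \<partial>lborel)"
    by (intro nn_integral_cong_AE) (use AE_lborel_singleton[of 0] survival in auto)
  also have "\<dots> = ennreal (a / (1 + a))"
    by (rule nn_integral_has_integral_lborel[OF _ _ has_integral_power_tail[OF a]])
       (use a in \<open>auto simp: indicator_def intro!: powr_le1\<close>)
  finally have "(\<integral>\<^sup>+\<omega>. ennreal (Y \<omega>) \<partial>M) = ennreal (a / (1 + a))" .
  then show ?thesis
    using a bnd by (subst integral_eq_nn_integral) auto
qed

section \<open>The probability integral transform\<close>

lemma marg_cdf_bounds:
  assumes "prob_space M"
  shows "0 \<le> marg_cdf M Z x \<and> marg_cdf M Z x \<le> 1"
proof -
  interpret prob_space M by fact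
  show ?thesis unfolding marg_cdf_def by simp
qed

lemma marg_cdf_mono:
  assumes "prob_space M" "Z \<in> borel_measurable M" "x \<le> y"
  shows "marg_cdf M Z x \<le> marg_cdf M Z y"
proof -
  interpret prob_space M by fact
  show ?thesis unfolding marg_cdf_def
    using assms by (intro finite_measure_mono) auto
qed

text \<open>\<open>marg_cdf\<close> is the distribution function of the law of \<open>Z\<close>; this gives access to
  the library's limits at \<open>\<plusminus>\<infinity>\<close>.\<close>

lemma marg_cdf_eq_cdf:
  assumes "prob_space M" "Z \<in> borel_measurable M"
  shows "marg_cdf M Z = cdf (distr M borel Z)"
proof
  fix x
  have "Z -` {..x} \<inter> space M = {\<omega>\<in>space M. Z \<omega> \<le> x}" by auto
  then show "marg_cdf M Z x = cdf (distr M borel Z) x"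
    using assms by (simp add: cdf_def marg_cdf_def measure_distr)
qed

text \<open>If the distribution function \<open>F\<close> of \<open>Z\<close> is continuous, then \<open>F(Z)\<close> is uniform on \<open>(0,1)\<close>:
  the event \<open>F(Z) \<le> s\<close> coincides with \<open>Z \<le> x\<^sub>0\<close>, where \<open>x\<^sub>0\<close> is the largest solution of
  \<open>F(x) = s\<close> (it exists by the intermediate value theorem and closedness).\<close>

lemma probability_integral_transform:
  assumes P: "prob_space M" and Zm[measurable]: "Z \<in> borel_measurable M"
    and cont: "continuous_on UNIV (marg_cdf M Z)" and s: "0 < s" "s < 1"
  shows "measure M {\<omega>\<in>space M. marg_cdf M Z (Z \<omega>) \<le> s} = s"
proof -
  interpret prob_space M by fact
  define F where "F = marg_cdf M Z"
  have mono: "F x \<le> F y" if "x \<le> y" for x y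
    unfolding F_def using marg_cdf_mono[OF P Zm that] .
  interpret rd: real_distribution "distr M borel Z" by (rule real_distribution_distr) simp
  have F_cdf: "F = cdf (distr M borel Z)" unfolding F_def by (rule marg_cdf_eq_cdf[OF P Zm])
  have "eventually (\<lambda>x. F x < s) at_bot"
    using order_tendstoD(2)[OF rd.cdf_lim_at_bot] s unfolding F_cdf by auto
  then obtain a where a: "F a < s" unfolding eventually_at_bot_linorder by auto
  have "eventually (\<lambda>x. F x > s) at_top"
    using order_tendstoD(1)[OF rd.cdf_lim_at_top_prob] s unfolding F_cdf by auto
  then obtain b where b: "F b > s" unfolding eventually_at_top_linorder by auto
  have "a \<le> b" using a b mono[of b a] by force
  moreover have contF: "continuous_on UNIV F" using cont unfolding F_def .
  ultimately obtain y where y: "F y = s"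
    using IVT'[of F a s b] a b continuous_on_subset[OF contF] by force
  define S where "S = {x. F x \<le> s}"
  have "closed S" unfolding S_def
    by (rule closed_Collect_le[OF contF]) (rule continuous_on_const)
  moreover have bdd: "bdd_above S" unfolding S_def bdd_above_def
    using b mono by (metis linorder_not_le mem_Collect_eq order.strict_trans2 less_le_not_le)
  moreover have yS: "y \<in> S" using y unfolding S_def by simp
  ultimately have "Sup S \<in> S" using closed_contains_Sup by blast
  moreover have "y \<le> Sup S" using cSup_upper[OF yS bdd] .
  ultimately have F_Sup: "F (Sup S) = s" using mono[of y "Sup S"] y unfolding S_def by auto
  have "{\<omega>\<in>space M. F (Z \<omega>) \<le> s} = {\<omega>\<in>space M. Z \<omega> \<le> Sup S}"
  proof safe
    fix \<omega> assume "F (Z \<omega>) \<le> s"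
    then show "Z \<omega> \<le> Sup S" using cSup_upper[OF _ bdd] unfolding S_def by simp
  next
    fix \<omega> assume "Z \<omega> \<le> Sup S"
    then show "F (Z \<omega>) \<le> s" using mono F_Sup by metis
  qed
  then show ?thesis using F_Sup unfolding F_def marg_cdf_def by simp
qed

lemma pw_bounds:
  assumes "0 \<le> u" "u \<le> 1" "0 \<le> c"
  shows "0 \<le> pw u c \<and> pw u c \<le> 1"
  using assms by (auto simp: pw_def intro!: powr_le1)

text \<open>The key equivalence \<open>u\<^bsup>1/c\<^esup> \<le> t \<longleftrightarrow> u \<le> t\<^sup>c\<close>, also valid for \<open>c = 0\<close> as \<open>t > 0\<close>.\<close>

lemma pw_le_iff:
  assumes u: "0 \<le> u" "u \<le> 1" and c: "0 \<le> c" and t: "0 < t" "t < 1"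
  shows "pw u c \<le> t \<longleftrightarrow> u \<le> t powr c"
proof (cases "c = 0")
  case True then show ?thesis using u t by (simp add: pw_def)
next
  case False
  then have c_pos: "0 < c" using c by simp
  show ?thesis
  proof
    assume "pw u c \<le> t"
    then have "(u powr (1/c)) powr c \<le> t powr c"
      using False c u by (intro powr_mono2) (auto simp: pw_def)
    then show "u \<le> t powr c" using c_pos u by (simp add: powr_powr)
  next
    assume "u \<le> t powr c"
    then have "u powr (1/c) \<le> (t powr c) powr (1/c)" using c_pos u by (intro powr_mono2) auto
    then show "pw u c \<le> t" using c_pos t False by (simp add: powr_powr pw_def)
  qed
qed

lemma pw_measurable[measurable]:
  assumes [measurable]: "f \<in> borel_measurable M"
  shows "(\<lambda>\<omega>. pw (f \<omega>) c) \<in> borel_measurable M"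
  unfolding pw_def by measurable

lemma wfull_bounds:
  assumes "w \<in> simplexS d" "i < d"
  shows "0 \<le> wfull d w i \<and> wfull d w i \<le> 1"
proof -
  have "0 \<le> (\<Sum>j<d-1. w j)"
    using assms(1) by (intro sum_nonneg) (auto simp: simplexS_def)
  then show ?thesis using assms unfolding wfull_def simplexS_def by auto
qed

lemma wfull_sum:
  assumes "d \<ge> 1"
  shows "(\<Sum>i<d. wfull d w i) = 1"
proof -
  have "(\<Sum>i<d. wfull d w i) = (\<Sum>i<d-1. wfull d w i) + wfull d w (d - 1)"
    using assms by (metis Suc_diff_1 less_le_trans sum.lessThan_Suc zero_less_one)
  also have "(\<Sum>i<d-1. wfull d w i) = (\<Sum>i<d-1. w i)"
    by (intro sum.cong) (auto simp: wfull_def)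
  finally show ?thesis by (simp add: wfull_def)
qed

lemma stdf_on_ray:
  assumes "w \<in> simplexS d" "d \<ge> 1" "s \<noteq> 0"
  shows "stdf d A (\<lambda>i. s * wfull d w i) = s * A w"
proof -
  have total: "(\<Sum>i<d. s * wfull d w i) = s"
    using wfull_sum[OF assms(2)] by (simp add: sum_distrib_left[symmetric])
  have "(\<lambda>i. if i < d - 1 then s * wfull d w i / (\<Sum>j<d. s * wfull d w j) else 0) = w"
    using assms(1,3) unfolding total by (auto simp: wfull_def simplexS_def)
  then show ?thesis unfolding stdf_def total by simp
qed

lemma expectation_power_margin:
  assumes P: "prob_space M" and Zm: "Z \<in> borel_measurable M"
    and cont: "continuous_on UNIV (marg_cdf M Z)" and c: "0 \<le> c"
  shows "(\<integral>\<omega>. pw (marg_cdf M Z (Z \<omega>)) c \<partial>M) = c / (1 + c)"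
proof (cases "c = 0")
  case True then show ?thesis by (simp add: pw_def)
next
  case False
  then have c_pos: "0 < c" using c by simp
  have U_meas: "(\<lambda>\<omega>. marg_cdf M Z (Z \<omega>)) \<in> borel_measurable M"
    using measurable_compose[OF Zm borel_measurable_continuous_onI[OF cont]] by (simp add: comp_def)
  note U_bnd = marg_cdf_bounds[OF P, of Z]
  show ?thesis
  proof (rule expectation_from_power_cdf[OF P _ _ c_pos])
    show "(\<lambda>\<omega>. pw (marg_cdf M Z (Z \<omega>)) c) \<in> borel_measurable M"
      using U_meas by measurable
    show "0 \<le> pw (marg_cdf M Z (Z \<omega>)) c \<and> pw (marg_cdf M Z (Z \<omega>)) c \<le> 1" for \<omega>
      using pw_bounds U_bnd c by blast
  next
    fix t :: real assume t: "0 < t" "t < 1"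
    have "{\<omega>\<in>space M. pw (marg_cdf M Z (Z \<omega>)) c \<le> t}
          = {\<omega>\<in>space M. marg_cdf M Z (Z \<omega>) \<le> t powr c}"
      using pw_le_iff[OF _ _ c t] U_bnd by auto
    also have "measure M \<dots> = t powr c"
      by (rule probability_integral_transform[OF P Zm cont])
         (use t c_pos in \<open>auto simp: powr01_less_one\<close>)
    finally show "measure M {\<omega>\<in>space M. pw (marg_cdf M Z (Z \<omega>)) c \<le> t} = t powr c" .
  qed
qed

text \<open>The maximum of the transformed margins has distribution function \<open>t\<^bsup>A(w)\<^esup>\<close>: it is
  \<open>\<le> t\<close> exactly when \<open>U\<^sub>i \<le> t\<^bsup>W\<^sub>i\<^esup>\<close> for all \<open>i\<close>, and the extreme-value copula at that point
  is \<open>exp(-\<ell>((-ln t) W)) = exp(ln t \<cdot> A(w))\<close>.\<close>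

lemma max_power_margins_cdf:
  fixes U :: "nat \<Rightarrow> 'a \<Rightarrow> real"
  assumes d: "d \<ge> 1" and w: "w \<in> simplexS d"
    and U_bnd: "\<And>i \<omega>. 0 \<le> U i \<omega> \<and> U i \<omega> \<le> 1"
    and copula: "\<And>u. (\<forall>i<d. 0 < u i \<and> u i \<le> 1) \<Longrightarrow>
           measure M {\<omega> \<in> space M. \<forall>i<d. U i \<omega> \<le> u i} = exp (- stdf d A (\<lambda>i. - ln (u i)))"
    and t: "0 < t" "t < 1"
  shows "measure M {\<omega>\<in>space M. Max ((\<lambda>i. pw (U i \<omega>) (wfull d w i)) ` {..<d}) \<le> t}
         = t powr A w"
proof -
  have "{\<omega>\<in>space M. Max ((\<lambda>i. pw (U i \<omega>) (wfull d w i)) ` {..<d}) \<le> t}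
        = {\<omega>\<in>space M. \<forall>i<d. U i \<omega> \<le> t powr wfull d w i}"
    using d pw_le_iff[OF _ _ _ t] U_bnd wfull_bounds[OF w]
    by (subst Max_le_iff) (auto simp: lessThan_empty_iff)
  also have "measure M \<dots> = exp (- stdf d A (\<lambda>i. - ln (t powr wfull d w i)))"
    using t wfull_bounds[OF w] by (intro copula) (auto intro: powr_le1)
  also have "(\<lambda>i. - ln (t powr wfull d w i)) = (\<lambda>i. (- ln t) * wfull d w i)"
    using t by (simp add: ln_powr mult.commute)
  also have "stdf d A \<dots> = (- ln t) * A w"
    using t by (intro stdf_on_ray[OF w d]) simp
  also have "exp (- ((- ln t) * A w)) = t powr A w"
    using t by (simp add: powr_def)
  finally show ?thesis .
qed

lemma expectation_max_power_margins:
  fixes U :: "nat \<Rightarrow> 'a \<Rightarrow> real"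
  assumes P: "prob_space M" and d: "d \<ge> 1" and w: "w \<in> simplexS d" and A_pos: "0 < A w"
    and U_meas: "\<And>i. i < d \<Longrightarrow> U i \<in> borel_measurable M"
    and U_bnd: "\<And>i \<omega>. 0 \<le> U i \<omega> \<and> U i \<omega> \<le> 1"
    and copula: "\<And>u. (\<forall>i<d. 0 < u i \<and> u i \<le> 1) \<Longrightarrow>
           measure M {\<omega> \<in> space M. \<forall>i<d. U i \<omega> \<le> u i} = exp (- stdf d A (\<lambda>i. - ln (u i)))"
  shows "(\<integral>\<omega>. Max ((\<lambda>i. pw (U i \<omega>) (wfull d w i)) ` {..<d}) \<partial>M) = A w / (1 + A w)"
proof (rule expectation_from_power_cdf[OF P _ _ A_pos])
  show "(\<lambda>\<omega>. Max ((\<lambda>i. pw (U i \<omega>) (wfull d w i)) ` {..<d})) \<in> borel_measurable M"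
    by (rule borel_measurable_Max) (auto intro!: pw_measurable U_meas)
  have bnd: "0 \<le> pw (U i \<omega>) (wfull d w i) \<and> pw (U i \<omega>) (wfull d w i) \<le> 1" if "i < d" for i \<omega>
    using pw_bounds U_bnd wfull_bounds[OF w that] by blast
  have "{..<d} \<noteq> {}" using d by (simp add: lessThan_empty_iff)
  then show "0 \<le> Max ((\<lambda>i. pw (U i \<omega>) (wfull d w i)) ` {..<d})
           \<and> Max ((\<lambda>i. pw (U i \<omega>) (wfull d w i)) ` {..<d}) \<le> 1" for \<omega>
    using bnd by (auto simp: Max_ge_iff Max_le_iff)
  show "measure M {\<omega>\<in>space M. Max ((\<lambda>i. pw (U i \<omega>) (wfull d w i)) ` {..<d}) \<le> t} = t powr A w"
    if "0 < t" "t < 1" for t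
    by (rule max_power_margins_cdf[OF d w U_bnd copula that])
qed

lemma madogram_formula:
  fixes M :: "'a measure" and X :: "nat \<Rightarrow> 'a \<Rightarrow> real"
  assumes P: "prob_space M" and d: "d \<ge> 1" and w: "w \<in> simplexS d" and A_pos: "0 < A w"
    and X_meas: "\<And>i. i < d \<Longrightarrow> X i \<in> borel_measurable M"
    and cont: "\<And>i. i < d \<Longrightarrow> continuous_on UNIV (marg_cdf M (X i))"
    and copula: "\<And>u. (\<forall>i<d. 0 < u i \<and> u i \<le> 1) \<Longrightarrow>
           measure M {\<omega> \<in> space M. \<forall>i<d. marg_cdf M (X i) (X i \<omega>) \<le> u i}
             = exp (- stdf d A (\<lambda>i. - ln (u i)))"
  shows "madogram M d X w = A w / (1 + A w) - cw d w"
proof -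
  interpret prob_space M by fact
  define Y where "Y i \<omega> = pw (marg_cdf M (X i) (X i \<omega>)) (wfull d w i)" for i \<omega>
  have U_meas: "(\<lambda>\<omega>. marg_cdf M (X i) (X i \<omega>)) \<in> borel_measurable M" if "i < d" for i
    using measurable_compose[OF X_meas[OF that] borel_measurable_continuous_onI[OF cont[OF that]]]
    by (simp add: comp_def)
  have Y_int: "integrable M (Y i)" if "i < d" for i
    using pw_bounds marg_cdf_bounds[OF P] wfull_bounds[OF w that] U_meas[OF that]
    unfolding Y_def by (intro integrable_const_bound[where B=1]) auto
  have max_int: "integrable M (\<lambda>\<omega>. Max ((\<lambda>i. Y i \<omega>) ` {..<d}))"
    using d by (intro integrable_MAX Y_int) (auto simp: lessThan_empty_iff)
  have E_max: "(\<integral>\<omega>. Max ((\<lambda>i. Y i \<omega>) ` {..<d}) \<partial>M) = A w / (1 + A w)"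
    unfolding Y_def
    by (rule expectation_max_power_margins[OF P d w A_pos U_meas marg_cdf_bounds[OF P] copula])
  have E_margin: "(\<integral>\<omega>. Y i \<omega> \<partial>M) = wfull d w i / (1 + wfull d w i)" if "i < d" for i
    unfolding Y_def using wfull_bounds[OF w that]
    by (intro expectation_power_margin[OF P X_meas[OF that] cont[OF that]]) simp
  have sum_int: "integrable M (\<lambda>\<omega>. (1 / real d) * (\<Sum>i<d. Y i \<omega>))"
    using Y_int by (intro integrable_mult_right integrable_sum) auto
  have "madogram M d X w
        = (\<integral>\<omega>. Max ((\<lambda>i. Y i \<omega>) ` {..<d}) \<partial>M) - (\<integral>\<omega>. (1 / real d) * (\<Sum>i<d. Y i \<omega>) \<partial>M)"
    unfolding madogram_def Y_def[symmetric]
    by (rule Bochner_Integration.integral_diff[OF max_int sum_int])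
  also have "(\<integral>\<omega>. (1 / real d) * (\<Sum>i<d. Y i \<omega>) \<partial>M) = (1 / real d) * (\<Sum>i<d. \<integral>\<omega>. Y i \<omega> \<partial>M)"
    using Y_int by (simp add: Bochner_Integration.integral_sum)
  also have "(\<Sum>i<d. \<integral>\<omega>. Y i \<omega> \<partial>M) = (\<Sum>i<d. wfull d w i / (1 + wfull d w i))"
    using E_margin by (intro sum.cong) auto
  finally show ?thesis
    unfolding E_max cw_def .
qed

text \<open>The theorem: the formula for \<open>\<nu>(w)\<close>, and its inversion, which is possible because
  \<open>\<nu>(w) + c(w) = A(w)/(1+A(w)) < 1\<close> for \<open>A(w) \<ge> 1/d > 0\<close>.\<close>

theorem mainTheorem1:
  fixes M :: "'a measure" and d :: nat and X :: "nat \<Rightarrow> 'a \<Rightarrow> real"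
    and A :: "(nat \<Rightarrow> real) \<Rightarrow> real"
  assumes "prob_space M"
    and "d \<ge> 2"
    and "\<And>i. i < d \<Longrightarrow> X i \<in> borel_measurable M"
    and "\<And>i. i < d \<Longrightarrow> continuous_on UNIV (marg_cdf M (X i))"
    and "\<And>w. w \<in> simplexS d \<Longrightarrow> 1 / real d \<le> A w \<and> A w \<le> 1"
    and "\<And>u. (\<forall>i<d. 0 < u i \<and> u i \<le> 1) \<Longrightarrow>
           measure M {\<omega> \<in> space M. \<forall>i<d. marg_cdf M (X i) (X i \<omega>) \<le> u i}
             = exp (- stdf d A (\<lambda>i. - ln (u i)))"
    and "w \<in> simplexS d"
  shows "madogram M d X w = A w / (1 + A w) - cw d w
       \<and> A w = (madogram M d X w + cw d w) / (1 - madogram M d X w - cw d w)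
       \<and> madogram M d X w + cw d w < 1"
proof -
  have "0 < 1 / real d" using assms(2) by simp
  then have A_pos: "0 < A w" using assms(5)[OF assms(7)] by linarith
  have nu: "madogram M d X w = A w / (1 + A w) - cw d w"
    using assms(2) by (intro madogram_formula[OF assms(1) _ assms(7) A_pos assms(3,4,6)]) auto
  then have sum: "madogram M d X w + cw d w = A w / (1 + A w)" by simp
  have den: "1 - madogram M d X w - cw d w = 1 / (1 + A w)"
    using sum A_pos by (simp add: field_simps)
  have inversion: "(madogram M d X w + cw d w) / (1 - madogram M d X w - cw d w) = A w"
    unfolding den sum using A_pos by simp
  have "madogram M d X w + cw d w < 1"
    unfolding sum using A_pos by simp
  then show ?thesis
    using nu inversion by simp
qed

end
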